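(* Let $\underline{l}=\min_k l_k$ and let $\mathcal{Y}_c=\{y\in\mathbb{Z}: \lfloor-\beta/\underline{l}\rfloor\le y\le\lceil\beta/\underline{l}\rceil+\alpha\}$. Let $\mathcal{Y}$ be an output alphabet with $\mathcal{Y}_c\subseteq\mathcal{Y}\subseteq\mathbb{Z}$, let $\Delta\ge 0$, and let $P_{\mathbf{Y}|\mathbf{X}}\in\Gamma_{\mathcal{Y}}(\Delta)$. Then there exists a function $F:\mathcal{Y}^n\to\mathcal{Y}_c^n$ such that the policy $F\circ P_{\mathbf{Y}|\mathbf{X}}$ (i.e. $\mathbf{x}\mapsto$ the law of $F(\mathbf{Y})$ for $\mathbf{Y}\sim P_{\mathbf{Y}|\mathbf{X}=\mathbf{x}}$) belongs to $\Gamma_{\mathcal{Y}_c}(\Delta)$.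
   Context: Fix integers $\alpha\ge 1$, $\beta\ge 0$, $n\ge 1$, and an initial state $s_0\in\mathcal{S}=\{0,\dots,\beta\}$. Let $\mathcal{X}=\{0,\dots,\alpha\}$. For $\mathbf{x}\in\mathcal{X}^n$, $\mathbf{y}\in\mathbb{Z}^n$ the battery states are $s_i=s_0+\sum_{k=0}^{i-1}y_k-\sum_{k=0}^{i-1}x_k$, $i=0,\dots,n$, and for an output alphabet $\mathcal{Y}\subseteq\mathbb{Z}$ with $\mathcal{X}\subseteq\mathcal{Y}$, $\mathcal{Y}^n(s_0,\mathbf{x})=\{\mathbf{y}\in\mathcal{Y}^n: s_i\in\{0,\dots,\beta\}\ \forall i=0,\dots,n\}$. A battery policy with output alphabet $\mathcal{Y}$ is a conditional distribution $P_{\mathbf{Y}|\mathbf{X}}$ from $\mathcal{X}^n$ to $\mathcal{Y}^n$; it is feasible if $\mathrm{supp}(P_{\mathbf{Y}|\mathbf{X}=\mathbf{x}})\subseteq\mathcal{Y}^n(s_0,\mathbf{x})$ for all $\mathbf{x}$; the set of feasible policies is $\Omega_{\mathcal{Y}}(s_0)$. Market price: a positive integer $K$, block lengths $l_0,\dots,l_{K-1}\ge 1$ with $\sum_k l_k=n$, prices $m_0,\dots,m_{K-1}\in\mathbb{R}$, and $\mathbf{m}\in\mathbb{R}^n$ the vector equal to $m_k$ on the $l_k$ consecutive time steps of block $k$ (blocks in order). The cost of a policy at $\mathbf{x}$ is $g(P_{\mathbf{Y}|\mathbf{X}},\mathbf{x})=\mathbb{E}_{P_{\mathbf{Y}|\mathbf{X}=\mathbf{x}}}[\mathbf{m}^T\mathbf{Y}]-\min_{\mathbf{y}\in\mathcal{Y}^n(s_0,\mathbf{x})}\mathbf{m}^T\mathbf{y}$.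 For $\Delta\ge0$, $\Gamma_{\mathcal{Y}}(\Delta)=\{P_{\mathbf{Y}|\mathbf{X}}\in\Omega_{\mathcal{Y}}(s_0): g(P_{\mathbf{Y}|\mathbf{X}},\mathbf{x})\le\Delta\ \forall\mathbf{x}\in\mathcal{X}^n\}$ is the set of feasible $\Delta$-affordable policies. *)

theory Defs
  imports "HOL-Probability.Probability"
begin

text \<open>Sequences of length n are int lists; x ! k is x_k (0-based).\<close>

definition Xn :: "int \<Rightarrow> nat \<Rightarrow> int list set" where
  "Xn \<alpha> n = {x. length x = n \<and> set x \<subseteq> {0..\<alpha>}}"

definition outseqs :: "int set \<Rightarrow> nat \<Rightarrow> int list set" where
  "outseqs Y n = {y. length y = n \<and> set y \<subseteq> Y}"

definition bstate :: "int \<Rightarrow> int list \<Rightarrow> int list \<Rightarrow> nat \<Rightarrow> int" where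
  "bstate s0 x y i = s0 + (\<Sum>k<i. y ! k) - (\<Sum>k<i. x ! k)"

definition feasible_outputs :: "int set \<Rightarrow> int \<Rightarrow> int \<Rightarrow> int list \<Rightarrow> int list set" where
  "feasible_outputs Y \<beta> s0 x =
     {y \<in> outseqs Y (length x). \<forall>i \<le> length x. 0 \<le> bstate s0 x y i \<and> bstate s0 x y i \<le> \<beta>}"

definition mvec :: "nat list \<Rightarrow> real list \<Rightarrow> real list" where
  "mvec ls ms = concat (map (\<lambda>(l, p). replicate l p) (zip ls ms))"

definition dotp :: "real list \<Rightarrow> int list \<Rightarrow> real" where
  "dotp m y = (\<Sum>i<length y. m ! i * real_of_int (y ! i))"

definition cost :: "real list \<Rightarrow> int set \<Rightarrow> int \<Rightarrow> int \<Rightarrow> (int list \<Rightarrow> int list pmf) \<Rightarrow> int list \<Rightarrow> real" where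
  "cost m Y \<beta> s0 P x =
     measure_pmf.expectation (P x) (\<lambda>y. dotp m y) - Min ((\<lambda>y. dotp m y) ` feasible_outputs Y \<beta> s0 x)"

definition feasible_policy :: "int \<Rightarrow> int \<Rightarrow> nat \<Rightarrow> int \<Rightarrow> int set \<Rightarrow> (int list \<Rightarrow> int list pmf) \<Rightarrow> bool" where
  "feasible_policy \<alpha> \<beta> n s0 Y P \<longleftrightarrow> (\<forall>x \<in> Xn \<alpha> n. set_pmf (P x) \<subseteq> feasible_outputs Y \<beta> s0 x)"

definition affordable :: "int \<Rightarrow> int \<Rightarrow> nat \<Rightarrow> int \<Rightarrow> real list \<Rightarrow> int set \<Rightarrow> real \<Rightarrow> (int list \<Rightarrow> int list pmf) set" where
  "affordable \<alpha> \<beta> n s0 m Y \<Delta> =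
     {P. feasible_policy \<alpha> \<beta> n s0 Y P \<and> (\<forall>x \<in> Xn \<alpha> n. cost m Y \<beta> s0 P x \<le> \<Delta>)}"

definition Yc :: "int \<Rightarrow> int \<Rightarrow> nat list \<Rightarrow> int set" where
  "Yc \<alpha> \<beta> ls = {y. \<lfloor>- real_of_int \<beta> / real (Min (set ls))\<rfloor> \<le> y \<and>
                      y \<le> \<lceil>real_of_int \<beta> / real (Min (set ls))\<rceil> + \<alpha>}"

end

theory Submission
  imports Defs
begin

text \<open>Work with cumulative outputs \<open>Y\<^sub>i = y\<^sub>0 + \<dots> + y\<^sub>i\<^sub>-\<^sub>1\<close>. Feasibility says that
  \<open>Y\<close> stays in the band \<open>[X\<^sub>i - s\<^sub>0, X\<^sub>i - s\<^sub>0 + \<beta>]\<close> around the cumulative input, and since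
  prices are constant on blocks the cost of \<open>y\<close> only depends on \<open>Y\<close> at the block boundaries.
  Replace \<open>Y\<close> inside each block of length \<open>l\<close> by its rounded-down linear interpolation: its
  increments lie between \<open>\<lfloor>T/l\<rfloor>\<close> and \<open>\<lceil>T/l\<rceil>\<close>, where the block increment \<open>T\<close> is in
  \<open>[-\<beta>, \<beta> + \<alpha> l]\<close> by feasibility, so they lie in \<open>Yc\<close>. To stay in the band, clamp the
  interpolation between the largest minorant and the smallest majorant of \<open>Y\<close> with increments
  in \<open>[0, \<alpha>]\<close>. Both lie in the band because \<open>X\<close> has increments in \<open>[0, \<alpha>]\<close>; they enclose
  \<open>Y\<close>, so clamping does not move the block-boundary values; and clamping keeps increments in
  \<open>Yc \<supseteq> [0, \<alpha>]\<close>.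
  The resulting map on outputs preserves feasibility and cost, so pushing the policy forward along
  it keeps it \<open>\<Delta>\<close>-affordable.\<close>

section \<open>Prefix sums and increments\<close>

definition psum :: "int list \<Rightarrow> nat \<Rightarrow> int" where
  "psum y k = (\<Sum>i<k. y ! i)"

definition increments :: "(nat \<Rightarrow> int) \<Rightarrow> nat \<Rightarrow> int list" where
  "increments A n = map (\<lambda>i. A (Suc i) - A i) [0..<n]"

lemma psum_Suc: "psum y (Suc k) = psum y k + y ! k"
  by (simp add: psum_def)

lemma increments_psum: "increments (psum y) (length y) = y"
  unfolding increments_def by (rule nth_equalityI) (auto simp: psum_Suc)

lemma psum_increments: "i \<le> n \<Longrightarrow> psum (increments A n) i = A i - A 0"
  using sum_lessThan_telescope[of A i] by (simp add: psum_def increments_def)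

lemma bstate_psum: "bstate s0 x y i = s0 + psum y i - psum x i"
  by (simp add: bstate_def psum_def)

lemma bstate_Suc: "bstate s0 x y (Suc k) = bstate s0 x y k + y ! k - x ! k"
  by (simp add: bstate_def)

lemma psum_Xn_incr:
  assumes "x \<in> Xn a n" "j + d \<le> n"
  shows "psum x j \<le> psum x (j + d) \<and> psum x (j + d) \<le> psum x j + a * int d"
  using assms(2)
proof (induction d)
  case (Suc d)
  have "x ! (j + d) \<in> set x" using Suc.prems assms(1) by (auto simp: Xn_def)
  then have "0 \<le> x ! (j + d) \<and> x ! (j + d) \<le> a" using assms(1) by (auto simp: Xn_def)
  then show ?case using Suc by (simp add: psum_Suc algebra_simps)
qed simp

lemma psum_Xn_le:
  assumes "x \<in> Xn a n" "i \<le> n" "j \<le> n"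
  shows "psum x i \<le> psum x j + a * int (i - j)"
  using psum_Xn_incr[OF assms(1), of i "j - i"] psum_Xn_incr[OF assms(1), of j "i - j"] assms(2,3)
  by (cases "i \<le> j") auto

section \<open>Rounded linear interpolation on blocks\<close>

fun block_bounds :: "nat list \<Rightarrow> nat \<Rightarrow> nat set" where
  "block_bounds [] off = {off}"
| "block_bounds (l # ls) off = insert off (block_bounds ls (off + l))"

fun block_spans :: "nat list \<Rightarrow> nat \<Rightarrow> (nat \<times> nat) set" where
  "block_spans [] off = {}"
| "block_spans (l # ls) off = insert (off, l) (block_spans ls (off + l))"

fun block_interp :: "(nat \<Rightarrow> int) \<Rightarrow> nat list \<Rightarrow> nat \<Rightarrow> nat \<Rightarrow> int" where
  "block_interp A [] off k = A off"
| "block_interp A (l # ls) off k =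
     (if k < off + l
      then A off + \<lfloor>real (k - off) * real_of_int (A (off + l) - A off) / real l\<rfloor>
      else block_interp A ls (off + l) k)"

lemma block_bounds_ge: "b \<in> block_bounds ls off \<Longrightarrow> off \<le> b"
  by (induction ls arbitrary: off) fastforce+

lemma block_bounds_le: "b \<in> block_bounds ls off \<Longrightarrow> b \<le> off + sum_list ls"
  by (induction ls arbitrary: off) fastforce+

lemma start_in_block_bounds: "off \<in> block_bounds ls off"
  by (cases ls) auto

lemma block_spans_bounds:
  "(o', l) \<in> block_spans ls off \<Longrightarrow> l \<in> set ls \<and> off \<le> o' \<and> o' + l \<le> off + sum_list ls"
  by (induction ls arbitrary: off) fastforce+

lemma block_interp_start: "\<forall>l\<in>set ls. l \<ge> 1 \<Longrightarrow> block_interp A ls off off = A off"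
  by (cases ls) auto

lemma block_interp_at_bounds:
  "\<forall>l\<in>set ls. l \<ge> 1 \<Longrightarrow> b \<in> block_bounds ls off \<Longrightarrow> block_interp A ls off b = A b"
proof (induction ls arbitrary: off)
  case (Cons l ls)
  show ?case
  proof (cases "b = off")
    case False
    with Cons.prems have "b \<in> block_bounds ls (off + l)" by simp
    with Cons show ?thesis using block_bounds_ge by fastforce
  qed (use Cons.prems in auto)
qed simp

lemma floor_add_diff_bounds:
  fixes x y :: real
  shows "\<lfloor>x\<rfloor> \<le> \<lfloor>y + x\<rfloor> - \<lfloor>y\<rfloor> \<and> \<lfloor>y + x\<rfloor> - \<lfloor>y\<rfloor> \<le> \<lceil>x\<rceil>"
proof -
  have "y + x < of_int (\<lfloor>y\<rfloor> + \<lceil>x\<rceil> + 1)"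
    using real_of_int_floor_add_one_gt[of y] le_of_int_ceiling[of x] by linarith
  then have "\<lfloor>y + x\<rfloor> \<le> \<lfloor>y\<rfloor> + \<lceil>x\<rceil>"
    by linarith
  then show ?thesis using le_floor_add[of y x] by linarith
qed

lemma block_interp_increment:
  assumes "\<forall>l\<in>set ls. l \<ge> 1"
    and "\<And>o' l. (o', l) \<in> block_spans ls off \<Longrightarrow>
       lo \<le> \<lfloor>real_of_int (A (o' + l) - A o') / real l\<rfloor> \<and>
       \<lceil>real_of_int (A (o' + l) - A o') / real l\<rceil> \<le> hi"
    and "off \<le> k" "k < off + sum_list ls"
  shows "lo \<le> block_interp A ls off (Suc k) - block_interp A ls off k \<and>
         block_interp A ls off (Suc k) - block_interp A ls off k \<le> hi"
  using assms
proof (induction ls arbitrary: off)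
  case (Cons l ls)
  show ?case
  proof (cases "k < off + l")
    case True
    define r where "r = real_of_int (A (off + l) - A off) / real l"
    define t where "t = real (k - off)"
    have l: "l > 0" using Cons.prems by auto
    have r_bounds: "lo \<le> \<lfloor>r\<rfloor> \<and> \<lceil>r\<rceil> \<le> hi"
      using Cons.prems(2)[of off l] by (simp add: r_def)
    have at_k: "block_interp A (l # ls) off k = A off + \<lfloor>t * r\<rfloor>"
      using True by (simp add: r_def t_def)
    have "block_interp A (l # ls) off (Suc k) = A off + \<lfloor>real (Suc (k - off)) * r\<rfloor>"
    proof (cases "Suc k < off + l")
      case False
      then have "Suc k = off + l" using True by simp
      moreover have "real (Suc (k - off)) = real l"
        using \<open>Suc k = off + l\<close> Cons.prems(3) by simp
      then have "real (Suc (k - off)) * r = real_of_int (A (off + l) - A off)"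
        using l by (simp add: r_def)
      ultimately show ?thesis
        using Cons.prems(1) block_interp_start[of ls A "off + l"] by simp
    qed (use Cons.prems in \<open>simp add: r_def Suc_diff_le\<close>)
    also have "real (Suc (k - off)) * r = t * r + r"
      by (simp add: t_def algebra_simps)
    finally show ?thesis
      using floor_add_diff_bounds[of "t * r" r] r_bounds at_k by linarith
  next
    case False
    then have "lo \<le> block_interp A ls (off + l) (Suc k) - block_interp A ls (off + l) k \<and>
               block_interp A ls (off + l) (Suc k) - block_interp A ls (off + l) k \<le> hi"
      using Cons by (intro Cons.IH) auto
    then show ?thesis using False by simp
  qed
qed simp

section \<open>Lipschitz envelopes\<close>

lemma Min_image_perturb:
  fixes f g :: "'a \<Rightarrow> 'b::linordered_ab_group_add"
  assumes "finite S" "S \<noteq> {}" "\<And>j. j \<in> S \<Longrightarrow> f j \<le> g j \<and> g j \<le> f j + c"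
  shows "Min (f ` S) \<le> Min (g ` S) \<and> Min (g ` S) \<le> Min (f ` S) + c"
proof
  show "Min (f ` S) \<le> Min (g ` S)"
    using assms by (subst Min_ge_iff) (auto intro: order.trans[OF Min_le])
  have "Min (f ` S) \<in> f ` S" using assms(1,2) by (intro Min_in) auto
  then obtain j where "j \<in> S" "f j = Min (f ` S)" by auto
  moreover have "Min (g ` S) \<le> g j" "g j \<le> f j + c"
    using assms \<open>j \<in> S\<close> by auto
  ultimately show "Min (g ` S) \<le> Min (f ` S) + c"
    by simp
qed

lemma Max_image_perturb:
  fixes f g :: "'a \<Rightarrow> 'b::linordered_ab_group_add"
  assumes "finite S" "S \<noteq> {}" "\<And>j. j \<in> S \<Longrightarrow> f j \<le> g j \<and> g j \<le> f j + c"
  shows "Max (f ` S) \<le> Max (g ` S) \<and> Max (g ` S) \<le> Max (f ` S) + c"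
proof
  have "Max (f ` S) \<in> f ` S" using assms(1,2) by (intro Max_in) auto
  then obtain j where "j \<in> S" "f j = Max (f ` S)" by auto
  moreover have "f j \<le> g j" "g j \<le> Max (g ` S)"
    using assms \<open>j \<in> S\<close> by auto
  ultimately show "Max (f ` S) \<le> Max (g ` S)"
    by simp
  show "Max (g ` S) \<le> Max (f ` S) + c"
    using assms by (subst Max_le_iff) (auto intro: order.trans[OF _ add_right_mono[OF Max_ge]])
qed

text \<open>By truncated subtraction, \<open>a * int (i - j)\<close> is \<open>a (i - j)\<^sup>+\<close>:
  \<open>lower_env\<close> is the largest path below \<open>A\<close> on \<open>{..n}\<close> with increments in \<open>[0, a]\<close>,
  and \<open>upper_env\<close> the smallest such path above it.\<close>

definition lower_env :: "int \<Rightarrow> nat \<Rightarrow> (nat \<Rightarrow> int) \<Rightarrow> nat \<Rightarrow> int" where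
  "lower_env a n A i = Min ((\<lambda>j. A j + a * int (i - j)) ` {..n})"

definition upper_env :: "int \<Rightarrow> nat \<Rightarrow> (nat \<Rightarrow> int) \<Rightarrow> nat \<Rightarrow> int" where
  "upper_env a n A i = Max ((\<lambda>j. A j - a * int (j - i)) ` {..n})"

lemma lower_env_increment:
  assumes "a \<ge> 0"
  shows "lower_env a n A i \<le> lower_env a n A (Suc i) \<and>
     lower_env a n A (Suc i) \<le> lower_env a n A i + a"
proof -
  have "int (Suc i - j) = int (i - j) + (if j \<le> i then 1 else 0)" for j
    by auto
  then show ?thesis using assms
    unfolding lower_env_def by (intro Min_image_perturb) (auto simp: algebra_simps)
qed

lemma upper_env_increment:
  assumes "a \<ge> 0"
  shows "upper_env a n A i \<le> upper_env a n A (Suc i) \<and>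
     upper_env a n A (Suc i) \<le> upper_env a n A i + a"
proof -
  have "int (j - i) = int (j - Suc i) + (if i < j then 1 else 0)" for j
    by auto
  then show ?thesis using assms
    unfolding upper_env_def by (intro Max_image_perturb) (auto simp: algebra_simps)
qed

lemma lower_env_le: "i \<le> n \<Longrightarrow> lower_env a n A i \<le> A i"
  unfolding lower_env_def by (rule Min_le) (auto intro: image_eqI[of _ _ i])

lemma upper_env_ge: "i \<le> n \<Longrightarrow> A i \<le> upper_env a n A i"
  unfolding upper_env_def by (rule Max_ge) (auto intro: image_eqI[of _ _ i])

lemma lower_env_ge:
  assumes "\<And>j. j \<le> n \<Longrightarrow> C i \<le> C j + a * int (i - j)" "\<And>j. j \<le> n \<Longrightarrow> C j \<le> A j"
  shows "C i \<le> lower_env a n A i"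
proof -
  have "C i \<le> A j + a * int (i - j)" if "j \<le> n" for j
    using assms[OF that] by linarith
  then show ?thesis unfolding lower_env_def by (subst Min_ge_iff) auto
qed

lemma upper_env_le:
  assumes "\<And>j. j \<le> n \<Longrightarrow> C j \<le> C i + a * int (j - i)" "\<And>j. j \<le> n \<Longrightarrow> A j \<le> C j"
  shows "upper_env a n A i \<le> C i"
  unfolding upper_env_def using assms by (subst Max_le_iff) (auto simp: algebra_simps intro: order.trans)

section \<open>The smoothed output\<close>

definition smoothed_path :: "int \<Rightarrow> nat \<Rightarrow> nat list \<Rightarrow> (nat \<Rightarrow> int) \<Rightarrow> nat \<Rightarrow> int" where
  "smoothed_path a n ls A i =
     max (lower_env a n A i) (min (block_interp A ls 0 i) (upper_env a n A i))"

lemma smoothed_path_between: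
  assumes "i \<le> n"
  shows "lower_env a n A i \<le> smoothed_path a n ls A i \<and> smoothed_path a n ls A i \<le> upper_env a n A i"
  using lower_env_le[OF assms, of a A] upper_env_ge[OF assms, of A a]
  by (auto simp: smoothed_path_def)

lemma smoothed_path_at_block_bounds:
  assumes "\<forall>l\<in>set ls. l \<ge> 1" "k \<in> block_bounds ls 0" "k \<le> n"
  shows "smoothed_path a n ls A k = A k"
  using block_interp_at_bounds[OF assms(1,2)] lower_env_le[OF assms(3)] upper_env_ge[OF assms(3)]
  by (simp add: smoothed_path_def)

lemma max_min_diff_bounds:
  fixes a b c a' b' c' :: int
  shows "min (a' - a) (min (b' - b) (c' - c)) \<le> max a' (min b' c') - max a (min b c) \<and>
         max a' (min b' c') - max a (min b c) \<le> max (a' - a) (max (b' - b) (c' - c))"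
  by (simp add: max_def min_def)

lemma smoothed_path_increment:
  assumes "a \<ge> 0" "lo \<le> 0" "a \<le> hi" "\<forall>l\<in>set ls. l \<ge> 1"
    and "\<And>o' l. (o', l) \<in> block_spans ls 0 \<Longrightarrow>
       lo \<le> \<lfloor>real_of_int (A (o' + l) - A o') / real l\<rfloor> \<and>
       \<lceil>real_of_int (A (o' + l) - A o') / real l\<rceil> \<le> hi"
    and "k < sum_list ls"
  shows "lo \<le> smoothed_path a n ls A (Suc k) - smoothed_path a n ls A k \<and>
         smoothed_path a n ls A (Suc k) - smoothed_path a n ls A k \<le> hi"
  using block_interp_increment[where off = 0 and k = k, OF assms(4,5)] assms(6)
    lower_env_increment[OF assms(1), of n A k] upper_env_increment[OF assms(1), of n A k]
    max_min_diff_bounds[of "lower_env a n A (Suc k)" "lower_env a n A k"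
      "block_interp A ls 0 (Suc k)" "block_interp A ls 0 k" "upper_env a n A (Suc k)" "upper_env a n A k"]
    assms(2,3)
  unfolding smoothed_path_def by (simp add: min.bounded_iff max.bounded_iff) linarith

definition smooth :: "int \<Rightarrow> nat \<Rightarrow> nat list \<Rightarrow> int list \<Rightarrow> int list" where
  "smooth a n ls y = increments (smoothed_path a n ls (psum y)) n"

lemma block_increment_battery_bounds:
  assumes "x \<in> Xn a n" "\<forall>i\<le>n. 0 \<le> bstate s0 x y i \<and> bstate s0 x y i \<le> b" "o' + l \<le> n"
  shows "- b \<le> psum y (o' + l) - psum y o' \<and> psum y (o' + l) - psum y o' \<le> b + a * int l"
  using psum_Xn_incr[OF assms(1,3)] assms(2)[rule_format, of o'] assms(2)[rule_format, of "o' + l"] assms(3)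
  by (auto simp: bstate_psum)

lemma block_rate_bounds:
  fixes a b T :: int and L l :: nat
  assumes "b \<ge> 0" "1 \<le> L" "L \<le> l" "- b \<le> T" "T \<le> b + a * int l"
  shows "\<lfloor>- real_of_int b / real L\<rfloor> \<le> \<lfloor>real_of_int T / real l\<rfloor> \<and>
         \<lceil>real_of_int T / real l\<rceil> \<le> \<lceil>real_of_int b / real L\<rceil> + a"
proof
  have l: "real l > 0" using assms(2,3) by simp
  have "- real_of_int b / real L \<le> - real_of_int b / real l"
    using assms(1-3) by (simp add: frac_le)
  also have "\<dots> = real_of_int (- b) / real l"
    by simp
  also have "\<dots> \<le> real_of_int T / real l"
    using assms(4) l by (intro divide_right_mono) auto
  finally show "\<lfloor>- real_of_int b / real L\<rfloor> \<le> \<lfloor>real_of_int T / real l\<rfloor>"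
    by (rule floor_mono)
  have "real_of_int T \<le> real_of_int (b + a * int l)"
    using assms(5) by (simp only: of_int_le_iff)
  then have "real_of_int T / real l \<le> real_of_int (b + a * int l) / real l"
    using l by (intro divide_right_mono) auto
  also have "\<dots> = real_of_int b / real l + real_of_int a"
    using l by (simp add: field_simps)
  also have "\<dots> \<le> real_of_int b / real L + real_of_int a"
    using assms(1-3) by (simp add: frac_le)
  finally show "\<lceil>real_of_int T / real l\<rceil> \<le> \<lceil>real_of_int b / real L\<rceil> + a"
    using ceiling_mono by fastforce
qed

lemma smoothed_path_battery:
  assumes "x \<in> Xn a n" "\<forall>i\<le>n. 0 \<le> bstate s0 x y i \<and> bstate s0 x y i \<le> b" "i \<le> n"
  shows "psum x i - s0 \<le> smoothed_path a n ls (psum y) i \<and>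
         smoothed_path a n ls (psum y) i \<le> psum x i - s0 + b"
proof -
  have "psum x i - s0 \<le> lower_env a n (psum y) i"
    by (rule lower_env_ge) (use psum_Xn_le[OF assms(1,3)] assms(2) in \<open>auto simp: bstate_psum\<close>)
  moreover have "upper_env a n (psum y) i \<le> psum x i - s0 + b"
    by (rule upper_env_le) (use psum_Xn_le[OF assms(1) _ assms(3)] assms(2) in \<open>auto simp: bstate_psum\<close>)
  ultimately show ?thesis using smoothed_path_between[OF assms(3), of a "psum y" ls] by linarith
qed

lemma bstate_smooth:
  assumes "\<forall>l\<in>set ls. l \<ge> 1" "i \<le> n"
  shows "bstate s0 x (smooth a n ls y) i = s0 + smoothed_path a n ls (psum y) i - psum x i"
  using psum_increments[OF assms(2)]
    smoothed_path_at_block_bounds[OF assms(1) start_in_block_bounds, of n a "psum y"]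
  by (simp add: bstate_psum smooth_def psum_def)

lemma smooth_in_Yc:
  assumes "a \<ge> 0" "b \<ge> 0" "ls \<noteq> []" "\<forall>l\<in>set ls. l \<ge> 1" "sum_list ls = n"
    and "x \<in> Xn a n" "\<forall>i\<le>n. 0 \<le> bstate s0 x y i \<and> bstate s0 x y i \<le> b"
  shows "smooth a n ls y \<in> outseqs (Yc a b ls) n"
proof -
  define L where "L = Min (set ls)"
  define lo where "lo = \<lfloor>- real_of_int b / real L\<rfloor>"
  define hi where "hi = \<lceil>real_of_int b / real L\<rceil> + a"
  have L: "1 \<le> L" "\<And>l. l \<in> set ls \<Longrightarrow> L \<le> l"
    using assms(3,4) by (auto simp: L_def)
  have "0 \<le> real_of_int b / real L"
    using assms(2) by simp
  then have "lo \<le> 0" "a \<le> hi"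
    by (auto simp: lo_def hi_def floor_le_iff)
  moreover have "lo \<le> \<lfloor>real_of_int (psum y (o' + l) - psum y o') / real l\<rfloor> \<and>
       \<lceil>real_of_int (psum y (o' + l) - psum y o') / real l\<rceil> \<le> hi"
    if "(o', l) \<in> block_spans ls 0" for o' l
    using block_spans_bounds[OF that] assms(2,5)
      block_increment_battery_bounds[OF assms(6,7), of o' l] L
    unfolding lo_def hi_def by (intro block_rate_bounds) auto
  ultimately have "lo \<le> smoothed_path a n ls (psum y) (Suc k) - smoothed_path a n ls (psum y) k \<and>
      smoothed_path a n ls (psum y) (Suc k) - smoothed_path a n ls (psum y) k \<le> hi" if "k < n" for k
    using that assms(1,4,5) by (intro smoothed_path_increment) auto
  then show ?thesis
    by (auto simp: outseqs_def smooth_def increments_def Yc_def lo_def hi_def L_def)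
qed

lemma smooth_feasible_outputs:
  assumes "a \<ge> 0" "b \<ge> 0" "ls \<noteq> []" "\<forall>l\<in>set ls. l \<ge> 1" "sum_list ls = n"
    and "x \<in> Xn a n" "y \<in> feasible_outputs Y b s0 x"
  shows "smooth a n ls y \<in> feasible_outputs (Yc a b ls) b s0 x"
proof -
  have n: "length x = n" using assms(6) by (simp add: Xn_def)
  then have battery: "\<forall>i\<le>n. 0 \<le> bstate s0 x y i \<and> bstate s0 x y i \<le> b"
    using assms(7) by (simp add: feasible_outputs_def)
  have "0 \<le> bstate s0 x (smooth a n ls y) i \<and> bstate s0 x (smooth a n ls y) i \<le> b" if "i \<le> n" for i
    using smoothed_path_battery[OF assms(6) battery that, of ls] bstate_smooth[OF assms(4) that]
    by simp
  then show ?thesis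
    using smooth_in_Yc[OF assms(1-6) battery] n by (simp add: feasible_outputs_def)
qed

section \<open>Cost and affordability\<close>

lemma sum_lessThan_add:
  fixes f :: "nat \<Rightarrow> 'a::comm_monoid_add"
  shows "(\<Sum>i<l + r. f i) = (\<Sum>i<l. f i) + (\<Sum>i<r. f (l + i))"
  by (induction r) (simp_all add: add.assoc)

lemma mvec_Cons: "mvec (l # ls) (p # ms) = replicate l p @ mvec ls ms"
  by (simp add: mvec_def)

text \<open>Prices are constant on blocks, so the weighted sum of increments telescopes within each
  block and only sees the path at the block boundaries.\<close>

lemma block_priced_increments_cong:
  assumes "length ms = length ls" "\<forall>b\<in>block_bounds ls off. A b = B b"
  shows "(\<Sum>i<sum_list ls. mvec ls ms ! i * real_of_int (A (off + Suc i) - A (off + i))) =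
         (\<Sum>i<sum_list ls. mvec ls ms ! i * real_of_int (B (off + Suc i) - B (off + i)))"
  using assms
proof (induction ls arbitrary: ms off)
  case (Cons l ls)
  then obtain p ms' where ms: "ms = p # ms'" and len: "length ms' = length ls"
    by (cases ms) auto
  have first_block: "(\<Sum>i<l. mvec (l # ls) ms ! i * real_of_int (C (off + Suc i) - C (off + i))) =
      p * real_of_int (C (off + l) - C off)" for C :: "nat \<Rightarrow> int"
  proof -
    have "(\<Sum>i<l. mvec (l # ls) ms ! i * real_of_int (C (off + Suc i) - C (off + i))) =
          p * (\<Sum>i<l. real_of_int (C (off + Suc i)) - real_of_int (C (off + i)))"
      by (auto simp: sum_distrib_left ms mvec_Cons nth_append intro!: sum.cong)
    then show ?thesis
      using sum_lessThan_telescope[of "\<lambda>i. real_of_int (C (off + i))" l] by simp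
  qed
  have later_blocks:
    "(\<Sum>i<sum_list ls. mvec (l # ls) ms ! (l + i) * real_of_int (C (off + Suc (l + i)) - C (off + (l + i)))) =
     (\<Sum>i<sum_list ls. mvec ls ms' ! i * real_of_int (C ((off + l) + Suc i) - C ((off + l) + i)))"
    for C :: "nat \<Rightarrow> int"
    by (rule sum.cong) (auto simp: ms mvec_Cons nth_append add.assoc)
  have "A (off + l) = B (off + l)" "A off = B off"
    using Cons.prems(2) start_in_block_bounds[of "off + l" ls] by auto
  moreover have
    "(\<Sum>i<sum_list ls. mvec ls ms' ! i * real_of_int (A ((off + l) + Suc i) - A ((off + l) + i))) =
     (\<Sum>i<sum_list ls. mvec ls ms' ! i * real_of_int (B ((off + l) + Suc i) - B ((off + l) + i)))"
    using Cons.prems(2) by (intro Cons.IH[OF len]) auto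
  ultimately show ?case
    unfolding sum_list.Cons sum_lessThan_add first_block later_blocks by simp
qed simp

lemma dotp_increments:
  "dotp m (increments A n) = (\<Sum>i<n. m ! i * real_of_int (A (Suc i) - A i))"
  by (simp add: dotp_def increments_def)

lemma dotp_smooth:
  assumes "length ms = length ls" "\<forall>l\<in>set ls. l \<ge> 1" "sum_list ls = n" "length y = n"
  shows "dotp (mvec ls ms) (smooth a n ls y) = dotp (mvec ls ms) y"
proof -
  let ?S = "smoothed_path a n ls (psum y)"
  have agree: "\<forall>k\<in>block_bounds ls 0. ?S k = psum y k"
  proof
    fix k assume k: "k \<in> block_bounds ls 0"
    then have "k \<le> n" using block_bounds_le[OF k] assms(3) by simp
    then show "?S k = psum y k" by (rule smoothed_path_at_block_bounds[OF assms(2) k])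
  qed
  have "dotp (mvec ls ms) (smooth a n ls y) =
        (\<Sum>i<sum_list ls. mvec ls ms ! i * real_of_int (?S (0 + Suc i) - ?S (0 + i)))"
    by (simp only: smooth_def dotp_increments assms(3) add_0)
  also have "\<dots> = (\<Sum>i<sum_list ls. mvec ls ms ! i * real_of_int (psum y (0 + Suc i) - psum y (0 + i)))"
    by (rule block_priced_increments_cong[OF assms(1) agree])
  also have "\<dots> = dotp (mvec ls ms) (increments (psum y) (length y))"
    by (simp only: dotp_increments assms(3,4) add_0)
  finally show ?thesis
    by (simp only: increments_psum)
qed

lemma finite_feasible_outputs:
  assumes "x \<in> Xn a n"
  shows "finite (feasible_outputs Y b s0 x)"
proof (rule finite_subset)
  have n: "length x = n" using assms by (simp add: Xn_def)
  show "feasible_outputs Y b s0 x \<subseteq> {ys. set ys \<subseteq> {- b..b + a} \<and> length ys = n}"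
  proof clarify
    fix ys assume "ys \<in> feasible_outputs Y b s0 x"
    then have len: "length ys = n" and battery: "\<forall>i\<le>n. 0 \<le> bstate s0 x ys i \<and> bstate s0 x ys i \<le> b"
      using n by (auto simp: feasible_outputs_def outseqs_def)
    have "ys ! k \<in> {- b..b + a}" if "k < n" for k
    proof -
      have "x ! k \<in> set x" using that n by simp
      then have "0 \<le> x ! k \<and> x ! k \<le> a"
        using assms by (auto simp: Xn_def)
      then show ?thesis
        using bstate_Suc[of s0 x ys k] battery[rule_format, of k] battery[rule_format, of "Suc k"] that
        by auto
    qed
    then show "set ys \<subseteq> {- b..b + a} \<and> length ys = n"
      using len by (auto simp: in_set_conv_nth)
  qed
  show "finite {ys. set ys \<subseteq> {- b..b + a} \<and> length ys = n}"
    by (rule finite_lists_length_eq) simp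
qed

lemma map_pmf_affordable:
  assumes P: "P \<in> affordable \<alpha> \<beta> n s0 m Y \<Delta>" and "Y' \<subseteq> Y"
    and F: "\<And>x y. x \<in> Xn \<alpha> n \<Longrightarrow> y \<in> feasible_outputs Y \<beta> s0 x \<Longrightarrow>
              F y \<in> feasible_outputs Y' \<beta> s0 x \<and> dotp m (F y) = dotp m y"
  shows "(\<lambda>x. map_pmf F (P x)) \<in> affordable \<alpha> \<beta> n s0 m Y' \<Delta>"
proof -
  have supp: "y \<in> feasible_outputs Y \<beta> s0 x" if "x \<in> Xn \<alpha> n" "y \<in> set_pmf (P x)" for x y
    using P that by (auto simp: affordable_def feasible_policy_def)
  have "cost m Y' \<beta> s0 (\<lambda>x. map_pmf F (P x)) x \<le> cost m Y \<beta> s0 P x" if x: "x \<in> Xn \<alpha> n" for x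
  proof -
    have "measure_pmf.expectation (map_pmf F (P x)) (dotp m) =
          measure_pmf.expectation (P x) (\<lambda>y. dotp m (F y))"
      by simp
    also have "\<dots> = measure_pmf.expectation (P x) (dotp m)"
      using F[OF x] supp[OF x] by (intro integral_cong_AE) (auto intro!: AE_pmfI)
    finally have same_mean: "measure_pmf.expectation (map_pmf F (P x)) (dotp m) =
      measure_pmf.expectation (P x) (dotp m)" .
    obtain y where "y \<in> set_pmf (P x)"
      using set_pmf_not_empty by fast
    then have "F y \<in> feasible_outputs Y' \<beta> s0 x"
      using F[OF x supp[OF x]] by blast
    moreover have "feasible_outputs Y' \<beta> s0 x \<subseteq> feasible_outputs Y \<beta> s0 x"
      using \<open>Y' \<subseteq> Y\<close> by (auto simp: feasible_outputs_def outseqs_def)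
    ultimately have "Min (dotp m ` feasible_outputs Y \<beta> s0 x) \<le> Min (dotp m ` feasible_outputs Y' \<beta> s0 x)"
      using finite_feasible_outputs[OF x] by (intro Min_antimono) auto
    with same_mean show ?thesis
      by (simp add: cost_def)
  qed
  with P F supp show ?thesis
    by (fastforce simp: affordable_def feasible_policy_def)
qed

lemma zero_mem_Yc:
  assumes "a \<ge> 0" "b \<ge> 0"
  shows "0 \<in> Yc a b ls"
proof -
  have "0 \<le> real_of_int b / real (Min (set ls))"
    using assms(2) by simp
  then show ?thesis
    using assms(1) by (auto simp: Yc_def floor_le_iff)
qed

theorem lemma4:
  fixes \<alpha> \<beta> s0 :: int and n :: nat and ls :: "nat list" and ms :: "real list"
    and Y :: "int set" and \<Delta> :: real and P :: "int list \<Rightarrow> int list pmf"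
  assumes "\<alpha> \<ge> 1" and "\<beta> \<ge> 0" and "n \<ge> 1" and "0 \<le> s0" and "s0 \<le> \<beta>"
    and "ls \<noteq> []" and "length ms = length ls" and "\<forall>l \<in> set ls. l \<ge> 1"
    and "sum_list ls = n"
    and "Yc \<alpha> \<beta> ls \<subseteq> Y"
    and "\<Delta> \<ge> 0"
    and "P \<in> affordable \<alpha> \<beta> n s0 (mvec ls ms) Y \<Delta>"
  shows "\<exists>F :: int list \<Rightarrow> int list.
           (\<forall>y \<in> outseqs Y n. F y \<in> outseqs (Yc \<alpha> \<beta> ls) n) \<and>
           (\<lambda>x. map_pmf F (P x)) \<in> affordable \<alpha> \<beta> n s0 (mvec ls ms) (Yc \<alpha> \<beta> ls) \<Delta>"
proof -
  \<comment> \<open>Only \<open>\<alpha> \<ge> 0\<close>, \<open>\<beta> \<ge> 0\<close> and the block structure are needed; the fallback value of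
    \<open>F\<close> is never reached on feasible outputs.\<close>
  define F where "F y = (if smooth \<alpha> n ls y \<in> outseqs (Yc \<alpha> \<beta> ls) n
                         then smooth \<alpha> n ls y else replicate n 0)" for y
  have "F y \<in> outseqs (Yc \<alpha> \<beta> ls) n" for y
    using zero_mem_Yc[of \<alpha> \<beta> ls] assms(1,2) by (auto simp: F_def outseqs_def)
  moreover have "(\<lambda>x. map_pmf F (P x)) \<in> affordable \<alpha> \<beta> n s0 (mvec ls ms) (Yc \<alpha> \<beta> ls) \<Delta>"
  proof (rule map_pmf_affordable[OF assms(12,10)])
    fix x y assume x: "x \<in> Xn \<alpha> n" and y: "y \<in> feasible_outputs Y \<beta> s0 x"
    have "smooth \<alpha> n ls y \<in> feasible_outputs (Yc \<alpha> \<beta> ls) \<beta> s0 x"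
      using smooth_feasible_outputs[OF _ assms(2,6,8,9) x y] assms(1) by simp
    moreover have "length y = n"
      using x y by (simp add: Xn_def feasible_outputs_def outseqs_def)
    ultimately show "F y \<in> feasible_outputs (Yc \<alpha> \<beta> ls) \<beta> s0 x \<and>
        dotp (mvec ls ms) (F y) = dotp (mvec ls ms) y"
      using dotp_smooth[OF assms(7,8,9)] x by (auto simp: F_def feasible_outputs_def Xn_def)
  qed
  ultimately show ?thesis by blast
qed

end
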